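(* Let $\beta>0$, $x=\tanh\beta$, and let $\sigma$ be distributed according to the Ising measure $\mathbb{I}_{0,\beta}$ on $\{1,\dots,n\}$. For every $r\ge1$ and indices $1\le i_1\le i_2\le\dots\le i_{2r}\le n$, $$\kappa(\sigma(i_1),\dots,\sigma(i_{2r}))=(-1)^{r-1}\sum_{\delta\in\mathfrak{D}^*_{2r}}\Big(\prod_{k=1}^{2r-1}\delta_k\Big)\,x^{\sum_{\{a<b\}\in\nu(\delta)}(i_b-i_a)}.$$
   Context: The Ising measure $\mathbb{I}_{0,\beta}$ gives to $\sigma:\{1,\dots,n\}\to\{\pm1\}$ probability proportional to $\exp(\beta\sum_{i=1}^{n-1}\sigma(i)\sigma(i+1))$. The joint cumulant is $\kappa(X_1,\dots,X_s)=\sum_{\Pi}(-1)^{\ell(\Pi)-1}(\ell(\Pi)-1)!\prod_{A\in\Pi}\mathbb{E}[\prod_{j\in A}X_j]$, the sum over set partitions $\Pi$ of $\{1,\dots,s\}$ with $\ell(\Pi)$ blocks. A Dyck path of length $2r$ is a sequence $\delta=(\delta_0,\dots,\delta_{2r})$ of nonnegative integers with $\delta_0=\delta_{2r}=0$ and $|\delta_{k+1}-\delta_k|=1$. $\mathfrak{D}^*_{2r}$ is the set of Dyck paths of length $2r$ with $\delta_k\ge1$ for all $1\le k\le2r-1$. For a Dyck path $\delta$, step $k$ (from $\delta_{k-1}$ to $\delta_k$) is up or down; $\nu(\delta)$ is the non-crossing pairing of $\{1,\dots,2r\}$ obtained by pairing each up step $a$ with the down step $b>a$ that first returns the path to level $\delta_{a-1}$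 (the usual matching). *)

theory Defs
  imports Complex_Main "HOL-Library.Disjoint_Sets"
begin

(* Spin configurations on {1..n}: functions in PiE (undefined outside {1..n}). *)
definition spins :: "nat \<Rightarrow> (nat \<Rightarrow> int) set" where
  "spins n = PiE {1..n} (\<lambda>_. {-1, 1})"

definition ising_weight :: "nat \<Rightarrow> real \<Rightarrow> (nat \<Rightarrow> int) \<Rightarrow> real" where
  "ising_weight n \<beta> \<sigma> = exp (\<beta> * (\<Sum>i = 1..<n. real_of_int (\<sigma> i * \<sigma> (Suc i))))"

definition ising_E :: "nat \<Rightarrow> real \<Rightarrow> ((nat \<Rightarrow> int) \<Rightarrow> real) \<Rightarrow> real" where
  "ising_E n \<beta> f =
     (\<Sum>\<sigma>\<in>spins n. f \<sigma> * ising_weight n \<beta> \<sigma>) / (\<Sum>\<sigma>\<in>spins n. ising_weight n \<beta> \<sigma>)"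

definition cumulant :: "(('a \<Rightarrow> real) \<Rightarrow> real) \<Rightarrow> nat \<Rightarrow> (nat \<Rightarrow> 'a \<Rightarrow> real) \<Rightarrow> real" where
  "cumulant E s X =
     (\<Sum>Q\<in>{P. partition_on {1..s} P}.
        (-1) ^ (card Q - 1) * fact (card Q - 1) *
        (\<Prod>A\<in>Q. E (\<lambda>\<omega>. \<Prod>j\<in>A. X j \<omega>)))"

definition dyck_star :: "nat \<Rightarrow> (nat \<Rightarrow> int) set" where
  "dyck_star r = {\<delta>. (\<forall>k>2*r. \<delta> k = 0) \<and> \<delta> 0 = 0 \<and> \<delta> (2*r) = 0 \<and>
       (\<forall>k<2*r. \<bar>\<delta> (Suc k) - \<delta> k\<bar> = 1) \<and>
       (\<forall>k\<in>{1..2*r-1}. \<delta> k \<ge> 1)}"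

(* the non-crossing pairing nu(delta): each up step a (delta_{a-1} -> delta_a) is paired with the
   first later step b that returns the path to level delta_{a-1} *)
definition dyck_pairing :: "nat \<Rightarrow> (nat \<Rightarrow> int) \<Rightarrow> (nat \<times> nat) set" where
  "dyck_pairing r \<delta> = {(a, LEAST b. a < b \<and> \<delta> b = \<delta> (a - 1)) | a.
       a \<in> {1..2*r} \<and> \<delta> a = \<delta> (a - 1) + 1}"

end

theory Submission
  imports Defs
begin

text \<open>
  The proof proceeds in five steps.
  (1) Gauge transformation: in the bond variables \<open>\<tau>(t) = \<sigma>(t) \<sigma>(t+1)\<close> the Ising measure
      is a product measure, which gives the moments \<open>E[\<Prod>\<^sub>j\<^sub>\<in>\<^sub>A \<sigma>(i\<^sub>j)]\<close>: zero for odd \<open>|A|\<close>,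
      otherwise \<open>x\<close> to the number of bonds with an odd number of the \<open>i\<^sub>j\<close> to their left
      (\<open>ising_moment\<close>).
  (2) In the cumulant's sum over set partitions only partitions into even blocks survive
      (\<open>cumulant_partition_sum\<close>).
  (3) Partitions of \<open>{1..k+1}\<close> arise from those of \<open>{1..k}\<close> by inserting \<open>k + 1\<close>
      (\<open>sum_partitions_insert\<close>).  Weighting a partition by a function \<open>state_weight\<close> of its
      numbers of odd and even blocks, the weighted sum does not depend on \<open>k\<close>
      (\<open>partition_sum_invariant\<close>), so the cumulant equals \<open>walk_sum i x (2r - 1) 1 1\<close>.
  (4) \<open>walk_sum\<close> is a weighted sum over positive lattice paths (\<open>walk_sum_paths\<close>), and
      these paths are exactly the Dyck paths of \<open>dyck_star r\<close> (\<open>dyck_star_paths\<close>).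
  (5) The weight of a Dyck path \<open>\<delta>\<close> is \<open>(-1)^(r-1) \<Prod>\<^sub>k \<delta>\<^sub>k\<close> times \<open>x\<close> to the power
      \<open>\<Sum>\<^sub>j (i\<^sub>j\<^sub>+\<^sub>1 - i\<^sub>j) \<delta>\<^sub>j\<close> (\<open>dyck_sign\<close>); since \<open>\<delta>\<^sub>j\<close> counts the arcs of \<open>\<nu>(\<delta>)\<close> covering step \<open>j\<close>
      (\<open>card_covering_arcs\<close>), this exponent is the total length \<open>\<Sum>(i\<^sub>b - i\<^sub>a)\<close> of the arcs
      (\<open>pairing_exponent\<close>).
\<close>

definition bonds :: "nat \<Rightarrow> (nat \<Rightarrow> int) \<Rightarrow> (nat \<Rightarrow> int)" where
  "bonds n \<sigma> = restrict (\<lambda>t. if t < n then \<sigma> t * \<sigma> (Suc t) else \<sigma> t) {1..n}"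

definition spins_of_bonds :: "nat \<Rightarrow> (nat \<Rightarrow> int) \<Rightarrow> (nat \<Rightarrow> int)" where
  "spins_of_bonds n \<tau> = restrict (\<lambda>t. \<Prod>u\<in>{t..n}. \<tau> u) {1..n}"

lemma spins_values: "\<sigma> \<in> spins n \<Longrightarrow> t \<in> {1..n} \<Longrightarrow> \<sigma> t \<in> {-1, 1}"
  unfolding spins_def by (auto simp: PiE_iff)

lemma prod_signs:
  "finite S \<Longrightarrow> (\<And>u. u \<in> S \<Longrightarrow> f u \<in> {-1, 1::int}) \<Longrightarrow> prod f S \<in> {-1, 1}"
proof (induction S rule: finite_induct)
  case (insert x F)
  then have "f x \<in> {-1, 1}" "prod f F \<in> {-1, 1}" by auto
  then show ?case using insert(1,2) by auto
qed simp

lemma bonds_spins: assumes \<sigma>: "\<sigma> \<in> spins n" shows "bonds n \<sigma> \<in> spins n"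
proof -
  have "bonds n \<sigma> t \<in> {-1, 1}" if "t \<in> {1..n}" for t
    using that spins_values[OF \<sigma>, of t] spins_values[OF \<sigma>, of "Suc t"]
    by (cases "t < n") (auto simp: bonds_def)
  then show ?thesis unfolding spins_def by (auto simp: PiE_iff bonds_def)
qed

lemma spins_of_bonds_spins: assumes \<tau>: "\<tau> \<in> spins n" shows "spins_of_bonds n \<tau> \<in> spins n"
proof -
  have "(\<Prod>u\<in>{t..n}. \<tau> u) \<in> {-1, 1}" if "t \<in> {1..n}" for t
    by (rule prod_signs) (use that spins_values[OF \<tau>] in auto)
  then show ?thesis unfolding spins_of_bonds_def spins_def by (auto simp: PiE_iff)
qed

text \<open>The product of the bonds to the right of \<open>t\<close> telescopes to \<open>\<sigma>(t)\<close>, as \<open>\<sigma>(u)\<^sup>2 = 1\<close>.\<close>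
lemma tail_product_bonds:
  assumes \<sigma>: "\<sigma> \<in> spins n" and t: "1 \<le> t" "t \<le> n"
  shows "(\<Prod>u\<in>{t..n}. bonds n \<sigma> u) = \<sigma> t"
  using t(2)
proof (induction t rule: inc_induct)
  case base
  then show ?case using t by (simp add: bonds_def)
next
  case (step m)
  have "{m..n} = insert m {Suc m..n}" using step by auto
  then have "(\<Prod>u\<in>{m..n}. bonds n \<sigma> u) = bonds n \<sigma> m * \<sigma> (Suc m)"
    using step by simp
  also have "\<dots> = \<sigma> m * (\<sigma> (Suc m) * \<sigma> (Suc m))"
    using step t by (simp add: bonds_def)
  also have "\<dots> = \<sigma> m" using spins_values[OF \<sigma>, of "Suc m"] step by auto
  finally show ?case .
qed

lemma spins_of_bonds_bonds: "\<sigma> \<in> spins n \<Longrightarrow> spins_of_bonds n (bonds n \<sigma>) = \<sigma>"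
  using tail_product_bonds[of \<sigma> n]
  by (intro ext) (auto simp: spins_of_bonds_def spins_def PiE_iff extensional_def)

lemma bonds_spins_of_bonds:
  assumes \<tau>: "\<tau> \<in> spins n" shows "bonds n (spins_of_bonds n \<tau>) = \<tau>"
proof (rule ext)
  fix t
  show "bonds n (spins_of_bonds n \<tau>) t = \<tau> t"
  proof (cases "t \<in> {1..n} \<and> t < n")
    case True
    then have "{t..n} = insert t {Suc t..n}" by auto
    then have "(\<Prod>u\<in>{t..n}. \<tau> u) = \<tau> t * (\<Prod>u\<in>{Suc t..n}. \<tau> u)" by simp
    moreover have "(\<Prod>u\<in>{Suc t..n}. \<tau> u) \<in> {-1, 1}"
      by (rule prod_signs) (use spins_values[OF \<tau>] True in auto)
    ultimately show ?thesis using True by (auto simp: bonds_def spins_of_bonds_def)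
  next
    case False
    then show ?thesis using \<tau>
      by (cases "t = n") (auto simp: bonds_def spins_of_bonds_def spins_def PiE_iff extensional_def)
  qed
qed

lemma bij_spins_of_bonds: "bij_betw (spins_of_bonds n) (spins n) (spins n)"
  by (rule bij_betw_byWitness[where f'="bonds n"])
    (auto simp: spins_of_bonds_bonds bonds_spins_of_bonds bonds_spins spins_of_bonds_spins)

lemma observable_spins_of_bonds:
  assumes A: "finite A" "\<And>j. j \<in> A \<Longrightarrow> i j \<in> {1..n}"
  shows "(\<Prod>j\<in>A. real_of_int (spins_of_bonds n \<tau> (i j))) =
         (\<Prod>u\<in>{1..n}. real_of_int (\<tau> u) ^ card {j\<in>A. i j \<le> u})"
proof -
  have tail: "spins_of_bonds n \<tau> t = (\<Prod>u\<in>{1..n}. if t \<le> u then \<tau> u else 1)" if "t \<in> {1..n}" for t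
  proof -
    have "{1..n} \<inter> {u. t \<le> u} = {t..n}" using that by auto
    then show ?thesis using that by (simp add: spins_of_bonds_def prod.If_cases)
  qed
  have "(\<Prod>j\<in>A. real_of_int (spins_of_bonds n \<tau> (i j))) =
        (\<Prod>j\<in>A. \<Prod>u\<in>{1..n}. if i j \<le> u then real_of_int (\<tau> u) else 1)"
    by (rule prod.cong) (auto simp: tail[OF A(2)] of_int_prod intro!: prod.cong)
  also have "\<dots> = (\<Prod>u\<in>{1..n}. \<Prod>j\<in>A. if i j \<le> u then real_of_int (\<tau> u) else 1)"
    by (rule prod.swap)
  also have "\<dots> = (\<Prod>u\<in>{1..n}. real_of_int (\<tau> u) ^ card {j\<in>A. i j \<le> u})"
    using A(1) by (intro prod.cong) (simp_all add: prod.If_cases Collect_conj_eq Int_commute)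
  finally show ?thesis .
qed

lemma ising_weight_spins_of_bonds:
  assumes \<tau>: "\<tau> \<in> spins n"
  shows "ising_weight n \<beta> (spins_of_bonds n \<tau>) =
    (\<Prod>u\<in>{1..n}. if u < n then exp (\<beta> * real_of_int (\<tau> u)) else 1)"
proof -
  have "(\<Sum>t = 1..<n. real_of_int (spins_of_bonds n \<tau> t * spins_of_bonds n \<tau> (Suc t))) =
        (\<Sum>t = 1..<n. real_of_int (\<tau> t))"
  proof (rule sum.cong)
    fix t assume t: "t \<in> {1..<n}"
    have "bonds n (spins_of_bonds n \<tau>) t = \<tau> t" using bonds_spins_of_bonds[OF \<tau>] by simp
    then show "real_of_int (spins_of_bonds n \<tau> t * spins_of_bonds n \<tau> (Suc t)) = real_of_int (\<tau> t)"
      using t by (simp add: bonds_def)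
  qed simp
  then have "ising_weight n \<beta> (spins_of_bonds n \<tau>) = (\<Prod>t = 1..<n. exp (\<beta> * real_of_int (\<tau> t)))"
    by (simp add: ising_weight_def sum_distrib_left exp_sum)
  also have "\<dots> = (\<Prod>u\<in>{1..n} \<inter> {u. u < n}. exp (\<beta> * real_of_int (\<tau> u)))"
    by (rule prod.cong) auto
  finally show ?thesis by (simp add: prod.If_cases)
qed

text \<open>The single-bond partition function with a bond power \<open>N\<close>: \<open>\<Sum>\<^sub>\<tau> \<tau>\<^sup>N e\<^sup>\<beta>\<^sup>\<tau>\<close>
  (for the last site, which carries no coupling, \<open>\<Sum>\<^sub>\<tau> \<tau>\<^sup>N\<close>).\<close>
definition bond_factor :: "real \<Rightarrow> nat \<Rightarrow> nat \<Rightarrow> nat \<Rightarrow> real" where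
  "bond_factor \<beta> n N u =
     (if u < n then (if even N then 2 * cosh \<beta> else 2 * sinh \<beta>) else (if even N then 2 else 0))"

lemma weighted_moment:
  assumes A: "finite A" "\<And>j. j \<in> A \<Longrightarrow> i j \<in> {1..n}"
  shows "(\<Sum>\<sigma>\<in>spins n. (\<Prod>j\<in>A. real_of_int (\<sigma> (i j))) * ising_weight n \<beta> \<sigma>) =
         (\<Prod>u\<in>{1..n}. bond_factor \<beta> n (card {j\<in>A. i j \<le> u}) u)"
proof -
  let ?g = "\<lambda>u s. real_of_int s ^ card {j\<in>A. i j \<le> u} * (if u < n then exp (\<beta> * real_of_int s) else 1)"
  have "(\<Sum>\<sigma>\<in>spins n. (\<Prod>j\<in>A. real_of_int (\<sigma> (i j))) * ising_weight n \<beta> \<sigma>) =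
        (\<Sum>\<tau>\<in>spins n. (\<Prod>j\<in>A. real_of_int (spins_of_bonds n \<tau> (i j))) *
                       ising_weight n \<beta> (spins_of_bonds n \<tau>))"
    using sum.reindex_bij_betw[OF bij_spins_of_bonds[of n], symmetric] by simp
  also have "\<dots> = (\<Sum>\<tau>\<in>spins n. \<Prod>u\<in>{1..n}. ?g u (\<tau> u))"
    by (rule sum.cong) (auto simp: observable_spins_of_bonds[OF A] ising_weight_spins_of_bonds
        prod.distrib[symmetric] intro!: prod.cong)
  also have "\<dots> = (\<Prod>u\<in>{1..n}. \<Sum>s\<in>{-1,1}. ?g u s)"
    unfolding spins_def by (rule prod_sum_PiE[symmetric]) auto
  also have "\<dots> = (\<Prod>u\<in>{1..n}. bond_factor \<beta> n (card {j\<in>A. i j \<le> u}) u)"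
    by (rule prod.cong) (auto simp: bond_factor_def cosh_def sinh_def exp_minus)
  finally show ?thesis .
qed

lemma ising_moment:
  assumes n: "1 \<le> n" and A: "finite A" "\<And>j. j \<in> A \<Longrightarrow> i j \<in> {1..n}"
  shows "ising_E n \<beta> (\<lambda>\<sigma>. \<Prod>j\<in>A. real_of_int (\<sigma> (i j))) =
    (if even (card A) then tanh \<beta> ^ card {u\<in>{1..<n}. odd (card {j\<in>A. i j \<le> u})} else 0)"
proof -
  define N where "N u = card {j\<in>A. i j \<le> u}" for u
  have "N n = card A"
    using A(2) by (auto simp: N_def intro!: arg_cong[where f=card])
  have cosh_pos: "cosh \<beta> > 0" by (simp add: cosh_def add_pos_pos)
  have "ising_E n \<beta> (\<lambda>\<sigma>. \<Prod>j\<in>A. real_of_int (\<sigma> (i j))) =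
      (\<Prod>u\<in>{1..n}. bond_factor \<beta> n (N u) u) / (\<Prod>u\<in>{1..n}. bond_factor \<beta> n 0 u)"
    unfolding ising_E_def N_def
    using weighted_moment[OF A, where \<beta>=\<beta>] weighted_moment[of "{}" i n, where \<beta>=\<beta>] by simp
  also have "\<dots> = (\<Prod>u\<in>{1..n}. bond_factor \<beta> n (N u) u / bond_factor \<beta> n 0 u)"
    by (rule prod_dividef[symmetric])
  also have "{1..n} = insert n {1..<n}" using n by auto
  also have "(\<Prod>u\<in>insert n {1..<n}. bond_factor \<beta> n (N u) u / bond_factor \<beta> n 0 u) =
     (if even (card A) then 1 else 0) * (\<Prod>u\<in>{1..<n}. if odd (N u) then tanh \<beta> else 1)"
    using cosh_pos \<open>N n = card A\<close>
    by (auto simp: bond_factor_def tanh_def intro!: prod.cong)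
  also have "(\<Prod>u\<in>{1..<n}. if odd (N u) then tanh \<beta> else 1) = tanh \<beta> ^ card {u\<in>{1..<n}. odd (N u)}"
    by (simp add: prod.If_cases Int_def conj_commute)
  finally show ?thesis by (simp add: N_def)
qed

lemma partition_add_singleton:
  assumes "partition_on S P" "a \<notin> S"
  shows "partition_on (insert a S) (insert {a} P)"
proof -
  have "disjnt {a} (\<Union>P)" using assms partition_onD1 by fastforce
  then show ?thesis using assms by (simp add: partition_on_insert insert_Diff_if)
qed

lemma partition_extend_block:
  assumes P: "partition_on S P" and a: "a \<notin> S" and A: "A \<in> P"
  shows "partition_on (insert a S) (insert (insert a A) (P - {A}))"
proof -
  have disj: "disjnt A (\<Union>(P - {A}))"
    using partition_onD2[OF P] A by (auto simp: disjnt_def disjoint_def)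
  have "partition_on S (insert A (P - {A}))" using P A by (simp add: insert_absorb)
  then have rest: "partition_on (S - A) (P - {A}) \<and> A \<subseteq> S \<and> A \<noteq> {}"
    by (rule partition_on_insert[OF disj, THEN iffD1])
  have new_disj: "disjnt (insert a A) (\<Union>(P - {A}))"
    using disj a P partition_onD1 by (fastforce simp: disjnt_def)
  have "insert a S - insert a A = S - A" using a by auto
  then show ?thesis unfolding partition_on_insert[OF new_disj] using rest by auto
qed

lemma partition_remove_point:
  assumes Q: "partition_on (insert a S) Q" and a: "a \<notin> S"
  shows "(\<exists>P. partition_on S P \<and> Q = insert {a} P) \<or>
         (\<exists>P A. partition_on S P \<and> A \<in> P \<and> Q = insert (insert a A) (P - {A}))"
proof -
  obtain B where B: "B \<in> Q" "a \<in> B" using partition_onD1[OF Q] by auto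
  have disj: "disjnt B (\<Union>(Q - {B}))"
    using partition_onD2[OF Q] B by (auto simp: disjnt_def disjoint_def)
  have "partition_on (insert a S) (insert B (Q - {B}))" using Q B by (simp add: insert_absorb)
  then have rest: "partition_on (insert a S - B) (Q - {B}) \<and> B \<subseteq> insert a S \<and> B \<noteq> {}"
    by (rule partition_on_insert[OF disj, THEN iffD1])
  show ?thesis
  proof (cases "B = {a}")
    case True
    then have "partition_on S (Q - {B})" using rest a by (simp add: Diff_insert_absorb)
    then show ?thesis using B True by (metis insert_Diff)
  next
    case False
    define A where "A = B - {a}"
    have A: "A \<noteq> {}" "A \<subseteq> S" "B = insert a A" "a \<notin> A"
      using False B rest by (auto simp: A_def)
    have A_disj: "disjnt A (\<Union>(Q - {B}))" using disj by (auto simp: A_def disjnt_def)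
    have "S - A = insert a S - B" using A a by auto
    then have P: "partition_on S (insert A (Q - {B}))"
      unfolding partition_on_insert[OF A_disj] using rest A by auto
    have "A \<notin> Q - {B}" using A_disj A by (auto simp: disjnt_def)
    then have "Q = insert (insert a A) (insert A (Q - {B}) - {A})" using B A by auto
    then show ?thesis using P by blast
  qed
qed

lemma partition_on_singleton: "partition_on {a} P \<longleftrightarrow> P = {{a}}"
proof
  assume P: "partition_on {a} P"
  have "B = {a}" if "B \<in> P" for B
    using that partition_onD1[OF P] partition_onD3[OF P] by (metis Union_upper subset_singleton_iff)
  moreover have "P \<noteq> {}" using partition_onD1[OF P] by auto
  ultimately show "P = {{a}}" by blast
qed (simp add: partition_on_space)

lemma point_outside_blocks: "partition_on S P \<Longrightarrow> A \<in> P \<Longrightarrow> a \<notin> S \<Longrightarrow> a \<notin> A"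
  by (auto dest: partition_onD1)

lemma inj_on_extend_block:
  assumes a: "a \<notin> S"
  shows "inj_on (\<lambda>(P, A). insert (insert a A) (P - {A})) (Sigma {P. partition_on S P} (\<lambda>P. P))"
proof (rule inj_onI)
  fix y z assume "y \<in> Sigma {P. partition_on S P} (\<lambda>P. P)" "z \<in> Sigma {P. partition_on S P} (\<lambda>P. P)"
    and eq: "(\<lambda>(P, A). insert (insert a A) (P - {A})) y = (\<lambda>(P, A). insert (insert a A) (P - {A})) z"
  then obtain P A P' A' where y: "y = (P, A)" "partition_on S P" "A \<in> P"
    and z: "z = (P', A')" "partition_on S P'" "A' \<in> P'" by auto
  note outside = point_outside_blocks[OF _ _ a]
  have e: "insert (insert a A) (P - {A}) = insert (insert a A') (P' - {A'})" using eq y z by simp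
  then have "insert a A \<in> insert (insert a A') (P' - {A'})" by blast
  moreover have "insert a A \<notin> P'" using outside[OF z(2)] by blast
  ultimately have "insert a A = insert a A'" by blast
  then have same_block: "A = A'" using outside[OF y(2,3)] outside[OF z(2,3)] by (simp add: insert_ident)
  moreover have "insert a A \<notin> P - {A}" "insert a A \<notin> P' - {A}"
    using outside[OF y(2)] outside[OF z(2)] by blast+
  ultimately have "P - {A} = P' - {A}" using e by (simp add: insert_ident)
  then show "y = z" using y z same_block by (metis insert_Diff)
qed

lemma extend_block_no_singleton:
  assumes "partition_on S P" "A \<in> P" "a \<notin> S"
  shows "{a} \<notin> insert (insert a A) (P - {A})"
proof -
  have "A \<noteq> {}" using assms partition_onD3 by blast
  then have "{a} \<noteq> insert a A" using point_outside_blocks[OF assms] by auto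
  moreover have "{a} \<notin> P" using point_outside_blocks[OF assms(1) _ assms(3)] by auto
  ultimately show ?thesis by simp
qed

lemma partitions_insert_point:
  assumes a: "a \<notin> S"
  shows "{Q. partition_on (insert a S) Q} = insert {a} ` {P. partition_on S P} \<union>
    (\<lambda>(P, A). insert (insert a A) (P - {A})) ` Sigma {P. partition_on S P} (\<lambda>P. P)"
    (is "_ = ?new \<union> ?join")
proof
  show "{Q. partition_on (insert a S) Q} \<subseteq> ?new \<union> ?join"
  proof
    fix Q assume "Q \<in> {Q. partition_on (insert a S) Q}"
    then have "partition_on (insert a S) Q" by simp
    from partition_remove_point[OF this a] show "Q \<in> ?new \<union> ?join"
    proof (elim disjE exE conjE)
      fix P assume "partition_on S P" "Q = insert {a} P"
      then have "Q \<in> ?new" by simp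
      then show ?thesis by (rule UnI1)
    next
      fix P A assume "partition_on S P" "A \<in> P" "Q = insert (insert a A) (P - {A})"
      then have "(P, A) \<in> Sigma {P. partition_on S P} (\<lambda>P. P)"
        "Q = (\<lambda>(P, A). insert (insert a A) (P - {A})) (P, A)" by simp_all
      then have "Q \<in> ?join" by (rule rev_image_eqI)
      then show ?thesis by (rule UnI2)
    qed
  qed
  show "?new \<union> ?join \<subseteq> {Q. partition_on (insert a S) Q}"
    using partition_add_singleton[OF _ a] partition_extend_block[OF _ a] by auto
qed

text \<open>Summing over the partitions of \<open>S \<union> {a}\<close>; as the two ways of inserting \<open>a\<close> are
  injective and never agree (only the first creates the block \<open>{a}\<close>), every partition is
  counted exactly once.\<close>
lemma sum_partitions_insert:
  assumes a: "a \<notin> S" and S: "finite S"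
  shows "(\<Sum>Q\<in>{Q. partition_on (insert a S) Q}. f Q) =
    (\<Sum>P\<in>{P. partition_on S P}. f (insert {a} P) + (\<Sum>A\<in>P. f (insert (insert a A) (P - {A}))))"
proof -
  let ?Ps = "{P. partition_on S P}"
  let ?join = "\<lambda>(P, A). insert (insert a A) (P - {A})"
  let ?PA = "Sigma ?Ps (\<lambda>P. P)"
  have fin_Ps: "finite ?Ps" using finitely_many_partition_on[OF S] .
  have fin_PA: "finite ?PA" using fin_Ps by (auto intro!: finite_SigmaI finite_elements[OF S])
  have inj_new: "inj_on (insert {a}) ?Ps"
    using point_outside_blocks[OF _ _ a] by (intro inj_onI) (metis insert_ident mem_Collect_eq singletonI)
  have disj: "insert {a} ` ?Ps \<inter> ?join ` ?PA = {}"
  proof (rule equals0I)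
    fix Q assume "Q \<in> insert {a} ` ?Ps \<inter> ?join ` ?PA"
    then have new: "Q \<in> insert {a} ` ?Ps" and join: "Q \<in> ?join ` ?PA" by (rule IntD1, rule IntD2)
    from new have "{a} \<in> Q" by auto
    moreover from join obtain P A where "Q = ?join (P, A)" and P: "partition_on S P" "A \<in> P"
      by auto
    ultimately show False using extend_block_no_singleton[OF P a] by simp
  qed
  have "(\<Sum>Q\<in>{Q. partition_on (insert a S) Q}. f Q) = sum f (insert {a} ` ?Ps) + sum f (?join ` ?PA)"
    unfolding partitions_insert_point[OF a] by (rule sum.union_disjoint) (use fin_Ps fin_PA disj in auto)
  also have "sum f (insert {a} ` ?Ps) = (\<Sum>P\<in>?Ps. f (insert {a} P))"
    by (simp add: sum.reindex[OF inj_new])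
  also have "sum f (?join ` ?PA) = (\<Sum>(P, A)\<in>?PA. f (insert (insert a A) (P - {A})))"
    by (subst sum.reindex[OF inj_on_extend_block[OF a]]) (simp add: case_prod_beta)
  also have "\<dots> = (\<Sum>P\<in>?Ps. \<Sum>A\<in>P. f (insert (insert a A) (P - {A})))"
    by (rule sum.Sigma[symmetric]) (use fin_Ps finite_elements[OF S] in auto)
  finally show ?thesis by (simp add: sum.distrib)
qed

lemma chain_mono:
  fixes i :: "nat \<Rightarrow> nat"
  assumes mono: "\<And>j. 1 \<le> j \<Longrightarrow> j < s \<Longrightarrow> i j \<le> i (Suc j)"
    and j: "1 \<le> j" "j \<le> k" and k: "k \<le> s"
  shows "i j \<le> i k"
  using j(2) k
proof (induction k rule: dec_induct)
  case (step k)
  then show ?case using mono[of k] j(1) by simp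
qed simp

definition block_exponent :: "(nat \<Rightarrow> nat) \<Rightarrow> nat \<Rightarrow> nat set \<Rightarrow> nat" where
  "block_exponent i k A = card {t\<in>{1..<i k}. odd (card {j\<in>A. i j \<le> t})}"

definition partition_exponent :: "(nat \<Rightarrow> nat) \<Rightarrow> nat \<Rightarrow> nat set set \<Rightarrow> nat" where
  "partition_exponent i k P = (\<Sum>A\<in>P. block_exponent i k A)"

definition odd_blocks :: "'a set set \<Rightarrow> nat" where
  "odd_blocks P = card {A\<in>P. odd (card A)}"

definition even_blocks :: "'a set set \<Rightarrow> nat" where
  "even_blocks P = card {A\<in>P. even (card A)}"

lemma odd_plus_even_blocks: "finite P \<Longrightarrow> odd_blocks P + even_blocks P = card P"
  unfolding odd_blocks_def even_blocks_def
  by (subst card_Un_disjoint[symmetric]) (auto intro: arg_cong[where f=card])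

lemma sum_by_parity:
  "finite P \<Longrightarrow> (\<Sum>A\<in>P. if odd (card A) then c else d) =
     of_nat (odd_blocks P) * c + of_nat (even_blocks P) * (d :: 'b :: comm_semiring_1)"
  by (simp add: sum.If_cases odd_blocks_def even_blocks_def Int_def conj_commute mult.commute)

lemma prod_block_moments:
  assumes "finite P"
  shows "(\<Prod>A\<in>P. if even (card A) then x ^ e A else 0) =
    (if odd_blocks P = 0 then x ^ (\<Sum>A\<in>P. e A) else (0 :: 'b :: comm_semiring_1))"
proof (cases "odd_blocks P = 0")
  case True
  then have "\<And>A. A \<in> P \<Longrightarrow> even (card A)" using assms by (auto simp: odd_blocks_def)
  then show ?thesis using True by (simp add: power_sum)
next
  case False
  then have "{A\<in>P. odd (card A)} \<noteq> {}" unfolding odd_blocks_def by (metis card.empty)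
  then obtain A where "A \<in> P" "odd (card A)" by blast
  then have "(\<Prod>A\<in>P. if even (card A) then x ^ e A else 0) = 0"
    using assms by (intro prod_zero) auto
  then show ?thesis using False by simp
qed

lemma block_moment:
  assumes mono: "\<And>j. 1 \<le> j \<Longrightarrow> j < s \<Longrightarrow> i j \<le> i (Suc j)"
    and i1: "1 \<le> i 1" and s: "1 \<le> s" and isn: "i s \<le> n" and A: "A \<subseteq> {1..s}"
  shows "ising_E n \<beta> (\<lambda>\<sigma>. \<Prod>j\<in>A. real_of_int (\<sigma> (i j))) =
    (if even (card A) then tanh \<beta> ^ block_exponent i s A else 0)"
proof -
  have range: "1 \<le> i j \<and> i j \<le> i s" if "j \<in> A" for j
    using that A i1 chain_mono[where i=i and s=s, OF mono, of 1 j]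
      chain_mono[where i=i and s=s, OF mono, of j s] by auto
  have n: "1 \<le> n" using i1 isn chain_mono[where i=i and s=s, OF mono, of 1 s] s by simp
  have fin: "finite A" using A finite_subset by blast
  have moment: "ising_E n \<beta> (\<lambda>\<sigma>. \<Prod>j\<in>A. real_of_int (\<sigma> (i j))) =
    (if even (card A) then tanh \<beta> ^ card {u\<in>{1..<n}. odd (card {j\<in>A. i j \<le> u})} else 0)"
    by (rule ising_moment[OF n fin]) (use range isn in fastforce)
  have "{u\<in>{1..<n}. odd (card {j\<in>A. i j \<le> u})} = {t\<in>{1..<i s}. odd (card {j\<in>A. i j \<le> t})}"
    if even: "even (card A)"
  proof -
    have all: "{j\<in>A. i j \<le> u} = A" if "i s \<le> u" for u using range that by force
    have "u < i s" if "odd (card {j\<in>A. i j \<le> u})" for u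
      using that even all[of u] by (cases "i s \<le> u") auto
    then show ?thesis using isn by (fastforce intro: less_le_trans)
  qed
  then show ?thesis using moment by (simp add: block_exponent_def)
qed

text \<open>The sums over walks that produce the cumulant coefficients: \<open>walk_sum i x m k h\<close> collects
  walks of \<open>m\<close> steps starting at height \<open>h\<close> at position \<open>k\<close>; see \<open>walk_sum_paths\<close> below.\<close>
fun walk_sum :: "(nat \<Rightarrow> nat) \<Rightarrow> real \<Rightarrow> nat \<Rightarrow> nat \<Rightarrow> nat \<Rightarrow> real" where
  "walk_sum i x 0 k h = (if h = 0 then 1 else 0)"
| "walk_sum i x (Suc m) k h = real h * x ^ ((i (Suc k) - i k) * h) *
     (walk_sum i x m (Suc k) (h - 1) - walk_sum i x m (Suc k) (Suc h))"

text \<open>The weight of a partition of \<open>{1..k}\<close> with \<open>h\<close> odd and \<open>q\<close> even blocks, in the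
  transfer from \<open>k = s\<close> (where it is the Moebius coefficient of the cumulant) down to \<open>k = 1\<close>.\<close>
definition state_weight :: "(nat \<Rightarrow> nat) \<Rightarrow> real \<Rightarrow> nat \<Rightarrow> nat \<Rightarrow> nat \<Rightarrow> nat \<Rightarrow> real" where
  "state_weight i x s k h q = (-1) ^ (h + q - 1) * fact (h + q - 1) * walk_sum i x (s - k) k h"

text \<open>The one-step recursion of the state weights: a new point either opens a singleton block
  or joins one of the \<open>h\<close> odd or \<open>q\<close> even blocks.\<close>
lemma state_weight_step:
  assumes hq: "1 \<le> h + q" and k: "k < s"
  shows "x ^ ((i (Suc k) - i k) * h) *
     (state_weight i x s (Suc k) (Suc h) q + real h * state_weight i x s (Suc k) (h - 1) (Suc q)
       + real q * state_weight i x s (Suc k) (Suc h) (q - 1)) = state_weight i x s k h q"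
proof -
  obtain p where p: "h + q = Suc p" using hq by (cases "h + q") auto
  obtain m where m: "s - k = Suc m" using k by (cases "s - k") auto
  have m': "s - Suc k = m" using m by auto
  define G1 where "G1 = walk_sum i x m (Suc k) (h - 1)"
  define G2 where "G2 = walk_sum i x m (Suc k) (Suc h)"
  define c where "c = ((-1::real) ^ p * fact p)"
  have t1: "state_weight i x s (Suc k) (Suc h) q = - c * real (Suc p) * G2"
    using p by (simp add: state_weight_def m' G2_def c_def fact_Suc algebra_simps)
  have t2: "real h * state_weight i x s (Suc k) (h - 1) (Suc q) = real h * c * G1"
    by (cases h) (use p in \<open>auto simp: state_weight_def m' G1_def c_def\<close>)
  have t3: "real q * state_weight i x s (Suc k) (Suc h) (q - 1) = real q * c * G2"
    by (cases q) (use p in \<open>auto simp: state_weight_def m' G2_def c_def\<close>)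
  have rhs: "state_weight i x s k h q = c * (real h * x ^ ((i (Suc k) - i k) * h) * (G1 - G2))"
    using p by (simp add: state_weight_def m c_def G1_def G2_def)
  have "real (Suc p) = real h + real q" using p by simp
  then show ?thesis unfolding t1 t2 t3 rhs by (simp add: algebra_simps)
qed

text \<open>The cumulant as a sum over all set partitions of \<open>{1..s}\<close>: partitions with an odd block
  drop out, the others contribute \<open>x\<close> to their total exponent times the Moebius coefficient.\<close>
lemma cumulant_partition_sum:
  assumes mono: "\<And>j. 1 \<le> j \<Longrightarrow> j < s \<Longrightarrow> i j \<le> i (Suc j)"
    and i1: "1 \<le> i 1" and s: "1 \<le> s" and isn: "i s \<le> n" and x: "x = tanh \<beta>"
  shows "cumulant (ising_E n \<beta>) s (\<lambda>j \<sigma>. real_of_int (\<sigma> (i j))) =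
    (\<Sum>P\<in>{P. partition_on {1..s} P}.
       x ^ partition_exponent i s P * state_weight i x s s (odd_blocks P) (even_blocks P))"
  unfolding cumulant_def
proof (rule sum.cong)
  fix P assume "P \<in> {P. partition_on {1..s} P}"
  then have P: "partition_on {1..s} P" by simp
  have fin: "finite P" using finite_elements[OF _ P] by simp
  have "(\<Prod>A\<in>P. ising_E n \<beta> (\<lambda>\<omega>. \<Prod>j\<in>A. real_of_int (\<omega> (i j)))) =
      (\<Prod>A\<in>P. if even (card A) then x ^ block_exponent i s A else 0)"
    using block_moment[OF mono i1 s isn] partition_onD1[OF P] x by (auto intro!: prod.cong)
  also have "\<dots> = (if odd_blocks P = 0 then x ^ partition_exponent i s P else 0)"
    unfolding partition_exponent_def by (rule prod_block_moments[OF fin])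
  finally show "(-1) ^ (card P - 1) * fact (card P - 1) *
      (\<Prod>A\<in>P. ising_E n \<beta> (\<lambda>\<omega>. \<Prod>j\<in>A. real_of_int (\<omega> (i j)))) =
      x ^ partition_exponent i s P * state_weight i x s s (odd_blocks P) (even_blocks P)"
    by (simp add: state_weight_def odd_plus_even_blocks[OF fin, symmetric])
qed simp

lemma block_exponent_late:
  assumes late: "\<And>j. j \<in> A \<Longrightarrow> i k \<le> i j"
  shows "block_exponent i k A = 0"
proof -
  have "{t\<in>{1..<i k}. odd (card {j\<in>A. i j \<le> t})} = {}"
  proof (rule equals0I)
    fix t assume t: "t \<in> {t\<in>{1..<i k}. odd (card {j\<in>A. i j \<le> t})}"
    then have none: "{j\<in>A. i j \<le> t} = {}" using late by fastforce
    from t have "odd (card {j\<in>A. i j \<le> t})" by blast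
    then show False unfolding none by simp
  qed
  then show ?thesis by (simp add: block_exponent_def)
qed

lemma block_exponent_Suc:
  assumes "1 \<le> i k" "i k \<le> i (Suc k)" "\<And>j. j \<in> A \<Longrightarrow> i j \<le> i k"
  shows "block_exponent i (Suc k) A =
    block_exponent i k A + (if odd (card A) then i (Suc k) - i k else 0)"
proof -
  let ?odd = "\<lambda>t. odd (card {j\<in>A. i j \<le> t})"
  have "{t\<in>{1..<i (Suc k)}. ?odd t} = {t\<in>{1..<i k}. ?odd t} \<union> {t\<in>{i k..<i (Suc k)}. ?odd t}"
    using assms by auto
  moreover have "{j\<in>A. i j \<le> t} = A" if "i k \<le> t" for t using assms(3) that by force
  then have "{t\<in>{i k..<i (Suc k)}. ?odd t} = (if odd (card A) then {i k..<i (Suc k)} else {})"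
    by auto
  moreover have "card ({t\<in>{1..<i k}. ?odd t} \<union> {t\<in>{i k..<i (Suc k)}. ?odd t}) =
     card {t\<in>{1..<i k}. ?odd t} + card {t\<in>{i k..<i (Suc k)}. ?odd t}"
    by (rule card_Un_disjoint) auto
  ultimately show ?thesis unfolding block_exponent_def by auto
qed

lemma block_exponent_insert_last:
  "block_exponent i (Suc k) (insert (Suc k) A) = block_exponent i (Suc k) A"
proof -
  have "{j\<in>insert (Suc k) A. i j \<le> t} = {j\<in>A. i j \<le> t}" if "t < i (Suc k)" for t
    using that by auto
  then show ?thesis unfolding block_exponent_def by (auto intro!: arg_cong[where f=card])
qed

lemma partition_exponent_Suc:
  assumes mono: "\<And>j. 1 \<le> j \<Longrightarrow> j < s \<Longrightarrow> i j \<le> i (Suc j)" and i1: "1 \<le> i 1"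
    and P: "partition_on {1..k} P" and k: "1 \<le> k" "k < s"
  shows "partition_exponent i (Suc k) P =
    partition_exponent i k P + (i (Suc k) - i k) * odd_blocks P"
proof -
  have fin: "finite P" using finite_elements[OF _ P] by simp
  have "block_exponent i (Suc k) A =
      block_exponent i k A + (if odd (card A) then i (Suc k) - i k else 0)" if "A \<in> P" for A
  proof (rule block_exponent_Suc)
    show "1 \<le> i k" using chain_mono[where i=i and s=s, OF mono, of 1 k] i1 k by simp
    show "i k \<le> i (Suc k)" using mono k by simp
    show "i j \<le> i k" if "j \<in> A" for j
    proof -
      have "j \<in> {1..k}" using that \<open>A \<in> P\<close> partition_onD1[OF P] by blast
      then show ?thesis using chain_mono[where i=i and s=s, OF mono, of j k] k by simp
    qed
  qed
  then show ?thesis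
    using fin by (simp add: partition_exponent_def sum.distrib sum_by_parity)
qed

lemma open_block_stats:
  assumes "finite P" "{Suc k} \<notin> P"
  shows "partition_exponent i (Suc k) (insert {Suc k} P) = partition_exponent i (Suc k) P"
    and "odd_blocks (insert {Suc k} P) = Suc (odd_blocks P)"
    and "even_blocks (insert {Suc k} P) = even_blocks P"
proof -
  have "block_exponent i (Suc k) {Suc k} = 0" by (rule block_exponent_late) simp
  then show "partition_exponent i (Suc k) (insert {Suc k} P) = partition_exponent i (Suc k) P"
    using assms by (simp add: partition_exponent_def)
  have "{A\<in>insert {Suc k} P. odd (card A)} = insert {Suc k} {A\<in>P. odd (card A)}"
    "{A\<in>insert {Suc k} P. even (card A)} = {A\<in>P. even (card A)}" by auto
  then show "odd_blocks (insert {Suc k} P) = Suc (odd_blocks P)"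
    "even_blocks (insert {Suc k} P) = even_blocks P"
    using assms by (simp_all add: odd_blocks_def even_blocks_def)
qed

lemma card_filter_replace:
  assumes P: "finite P" and A: "A \<in> P" and X: "X \<notin> P - {A}"
  shows "int (card {B\<in>insert X (P - {A}). Q B}) =
    int (card {B\<in>P. Q B}) - (if Q A then 1 else 0) + (if Q X then 1 else 0)"
proof -
  have fin: "finite ({B\<in>P. Q B} - {A})" using P by auto
  have rem: "int (card ({B\<in>P. Q B} - {A})) = int (card {B\<in>P. Q B}) - (if Q A then 1 else 0)"
  proof (cases "Q A")
    case True
    then have "A \<in> {B\<in>P. Q B}" using A by simp
    moreover from this have "card {B\<in>P. Q B} > 0" using P card_gt_0_iff by fastforce
    ultimately show ?thesis using True P by (simp add: card_Diff_singleton of_nat_diff)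
  qed simp
  show ?thesis
  proof (cases "Q X")
    case True
    then have "{B\<in>insert X (P - {A}). Q B} = insert X ({B\<in>P. Q B} - {A})" by auto
    then show ?thesis using True X fin rem by simp
  next
    case False
    then have "{B\<in>insert X (P - {A}). Q B} = {B\<in>P. Q B} - {A}" by auto
    then show ?thesis using False rem by simp
  qed
qed

lemma join_block_stats:
  assumes P: "finite P" and A: "A \<in> P" "finite A" and new: "\<And>B. B \<in> P \<Longrightarrow> Suc k \<notin> B"
  defines "J \<equiv> insert (insert (Suc k) A) (P - {A})"
  shows "partition_exponent i (Suc k) J = partition_exponent i (Suc k) P"
    and "odd_blocks J = (if odd (card A) then odd_blocks P - 1 else Suc (odd_blocks P))"
    and "even_blocks J = (if odd (card A) then Suc (even_blocks P) else even_blocks P - 1)"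
proof -
  have X: "insert (Suc k) A \<notin> P - {A}" using new by blast
  have card_X: "card (insert (Suc k) A) = Suc (card A)" using A new by simp
  show "partition_exponent i (Suc k) J = partition_exponent i (Suc k) P"
    using P A X by (simp add: J_def partition_exponent_def block_exponent_insert_last sum.remove)
  have "int (odd_blocks J) = int (odd_blocks P) - (if odd (card A) then 1 else 0) +
      (if odd (card A) then 0 else 1)"
    using card_filter_replace[OF P A(1) X, of "\<lambda>B. odd (card B)"] card_X
    by (simp add: odd_blocks_def J_def)
  then show "odd_blocks J = (if odd (card A) then odd_blocks P - 1 else Suc (odd_blocks P))"
    by auto
  have "int (even_blocks J) = int (even_blocks P) - (if odd (card A) then 0 else 1) +
      (if odd (card A) then 1 else 0)"
    using card_filter_replace[OF P A(1) X, of "\<lambda>B. even (card B)"] card_X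
    by (simp add: even_blocks_def J_def)
  then show "even_blocks J = (if odd (card A) then Suc (even_blocks P) else even_blocks P - 1)"
    by auto
qed

lemma insertion_step:
  fixes x :: real
  assumes mono: "\<And>j. 1 \<le> j \<Longrightarrow> j < s \<Longrightarrow> i j \<le> i (Suc j)" and i1: "1 \<le> i 1"
    and P: "partition_on {1..k} P" and k: "1 \<le> k" "k < s"
  defines "w \<equiv> \<lambda>k P. x ^ partition_exponent i k P * state_weight i x s k (odd_blocks P) (even_blocks P)"
  shows "w (Suc k) (insert {Suc k} P) + (\<Sum>A\<in>P. w (Suc k) (insert (insert (Suc k) A) (P - {A}))) =
    w k P"
proof -
  have fin: "finite P" using finite_elements[OF _ P] by simp
  have blocks: "A \<subseteq> {1..k}" if "A \<in> P" for A using that partition_onD1[OF P] by blast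
  have fin_blocks: "finite A" if "A \<in> P" for A by (rule finite_subset[OF blocks[OF that]]) simp
  have new: "Suc k \<notin> A" if "A \<in> P" for A using blocks[OF that] by auto
  define h q where "h = odd_blocks P" and "q = even_blocks P"
  define e where "e = partition_exponent i (Suc k) P"
  let ?sw = "state_weight i x s (Suc k)"
  have e: "e = partition_exponent i k P + (i (Suc k) - i k) * h"
    unfolding e_def h_def by (rule partition_exponent_Suc[OF mono i1 P k])
  have hq: "1 \<le> h + q"
    using odd_plus_even_blocks[OF fin] partition_onD1[OF P] k fin
    by (auto simp: h_def q_def Suc_le_eq card_gt_0_iff)
  have "{Suc k} \<notin> P" using new by blast
  then have opened: "w (Suc k) (insert {Suc k} P) = x ^ e * ?sw (Suc h) q"
    using open_block_stats[OF fin] by (simp add: w_def e_def h_def q_def)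
  have "w (Suc k) (insert (insert (Suc k) A) (P - {A})) =
      x ^ e * (if odd (card A) then ?sw (h - 1) (Suc q) else ?sw (Suc h) (q - 1))" if "A \<in> P" for A
    using join_block_stats[OF fin that fin_blocks[OF that] new] by (simp add: w_def e_def h_def q_def)
  then have "(\<Sum>A\<in>P. w (Suc k) (insert (insert (Suc k) A) (P - {A}))) =
      x ^ e * (\<Sum>A\<in>P. if odd (card A) then ?sw (h - 1) (Suc q) else ?sw (Suc h) (q - 1))"
    by (simp add: sum_distrib_left)
  also have "\<dots> = x ^ e * (real h * ?sw (h - 1) (Suc q) + real q * ?sw (Suc h) (q - 1))"
    using fin by (simp add: sum_by_parity h_def q_def)
  finally have joined: "(\<Sum>A\<in>P. w (Suc k) (insert (insert (Suc k) A) (P - {A}))) =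
      x ^ e * (real h * ?sw (h - 1) (Suc q) + real q * ?sw (Suc h) (q - 1))" .
  have "x ^ ((i (Suc k) - i k) * h) *
      (?sw (Suc h) q + real h * ?sw (h - 1) (Suc q) + real q * ?sw (Suc h) (q - 1)) =
      state_weight i x s k h q"
    by (rule state_weight_step[OF hq k(2)])
  then have "x ^ partition_exponent i k P * (x ^ ((i (Suc k) - i k) * h) *
      (?sw (Suc h) q + real h * ?sw (h - 1) (Suc q) + real q * ?sw (Suc h) (q - 1))) = w k P"
    by (simp add: w_def h_def q_def)
  then show ?thesis
    unfolding opened joined e by (simp add: power_add ring_distribs mult_ac)
qed

text \<open>Hence the weighted sum over the partitions of \<open>{1..k}\<close> does not depend on \<open>k\<close>; for
  \<open>k = 1\<close> only the partition \<open>{{1}}\<close> occurs, with one odd block.\<close>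
lemma partition_sum_invariant:
  fixes x :: real
  assumes mono: "\<And>j. 1 \<le> j \<Longrightarrow> j < s \<Longrightarrow> i j \<le> i (Suc j)" and i1: "1 \<le> i 1"
    and k: "1 \<le> k" "k \<le> s"
  shows "(\<Sum>P\<in>{P. partition_on {1..k} P}.
      x ^ partition_exponent i k P * state_weight i x s k (odd_blocks P) (even_blocks P)) =
    walk_sum i x (s - 1) 1 1"
  using k
proof (induction k rule: dec_induct)
  case base
  have "{P. partition_on {1..1::nat} P} = {{{1}}}" by (simp add: partition_on_singleton)
  moreover have "partition_exponent i 1 {{1}} = 0"
    using block_exponent_late[of "{1}" i 1] by (simp add: partition_exponent_def)
  moreover have "{A\<in>{{1::nat}}. odd (card A)} = {{1}}" "{A\<in>{{1::nat}}. even (card A)} = {}"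
    by auto
  then have "odd_blocks {{1::nat}} = 1" "even_blocks {{1::nat}} = 0"
    unfolding odd_blocks_def even_blocks_def by (simp_all only:) simp_all
  ultimately show ?case using base by (simp add: state_weight_def)
next
  case (step k)
  have "{1..Suc k} = insert (Suc k) {1..k}" by auto
  then show ?case
    using step insertion_step[OF mono i1 _ step(1), where x=x]
    by (simp add: sum_partitions_insert)
qed

definition positive_paths :: "nat \<Rightarrow> nat \<Rightarrow> int \<Rightarrow> (nat \<Rightarrow> int) set" where
  "positive_paths m k h = {\<delta>. (\<forall>j. (j < k \<or> k + m < j) \<longrightarrow> \<delta> j = 0) \<and> \<delta> k = h \<and> \<delta> (k + m) = 0 \<and>
     (\<forall>j. k \<le> j \<longrightarrow> j < k + m \<longrightarrow> \<bar>\<delta> (Suc j) - \<delta> j\<bar> = 1) \<and>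
     (\<forall>j. k \<le> j \<longrightarrow> j < k + m \<longrightarrow> \<delta> j \<ge> 1)}"

definition path_weight :: "(nat \<Rightarrow> nat) \<Rightarrow> real \<Rightarrow> nat \<Rightarrow> nat \<Rightarrow> (nat \<Rightarrow> int) \<Rightarrow> real" where
  "path_weight i x m k \<delta> = (\<Prod>j\<in>{k..<k+m}.
     real_of_int ((\<delta> j - \<delta> (Suc j)) * \<delta> j) * x ^ ((i (Suc j) - i j) * nat (\<delta> j)))"

lemma positive_paths_0: "positive_paths 0 k h = (if h = 0 then {\<lambda>_. 0} else {})"
proof -
  have "\<delta> = (\<lambda>_. 0)" if "\<delta> \<in> positive_paths 0 k h" for \<delta>
  proof
    fix j show "\<delta> j = 0"
      using that by (cases j k rule: linorder_cases) (auto simp: positive_paths_def)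
  qed
  then show ?thesis by (auto simp: positive_paths_def)
qed

lemma positive_paths_nonpos: "h \<le> 0 \<Longrightarrow> positive_paths (Suc m) k h = {}"
  unfolding positive_paths_def by fastforce

lemma positive_paths_Suc:
  assumes h: "h \<ge> 1"
  shows "positive_paths (Suc m) k h =
    (\<lambda>\<delta>. \<delta>(k := h)) ` (positive_paths m (Suc k) (h - 1) \<union> positive_paths m (Suc k) (h + 1))"
proof
  show "positive_paths (Suc m) k h \<subseteq>
      (\<lambda>\<delta>. \<delta>(k := h)) ` (positive_paths m (Suc k) (h - 1) \<union> positive_paths m (Suc k) (h + 1))"
  proof
    fix \<delta> assume \<delta>: "\<delta> \<in> positive_paths (Suc m) k h"
    have "\<delta> = (\<delta>(k := 0))(k := h)" using \<delta> by (auto simp: positive_paths_def)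
    moreover have "\<delta>(k := 0) \<in> positive_paths m (Suc k) (\<delta> (Suc k))"
      using \<delta> unfolding positive_paths_def by (auto simp: le_Suc_eq)
    moreover have "\<delta> (Suc k) = h - 1 \<or> \<delta> (Suc k) = h + 1"
      using \<delta> unfolding positive_paths_def by fastforce
    ultimately show "\<delta> \<in> (\<lambda>\<delta>. \<delta>(k := h)) `
        (positive_paths m (Suc k) (h - 1) \<union> positive_paths m (Suc k) (h + 1))"
      by (metis Un_iff image_eqI)
  qed
  show "(\<lambda>\<delta>. \<delta>(k := h)) ` (positive_paths m (Suc k) (h - 1) \<union> positive_paths m (Suc k) (h + 1))
      \<subseteq> positive_paths (Suc m) k h"
  proof
    fix \<delta> assume "\<delta> \<in> (\<lambda>\<delta>. \<delta>(k := h)) `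
        (positive_paths m (Suc k) (h - 1) \<union> positive_paths m (Suc k) (h + 1))"
    then obtain \<delta>' g where \<delta>': "\<delta>' \<in> positive_paths m (Suc k) g"
      and g: "g = h - 1 \<or> g = h + 1" and \<delta>: "\<delta> = \<delta>'(k := h)" by auto
    have "\<bar>\<delta> (Suc j) - \<delta> j\<bar> = 1 \<and> \<delta> j \<ge> 1" if "k \<le> j" "j < k + Suc m" for j
      using \<delta>' g h that unfolding \<delta> positive_paths_def by (cases "j = k") auto
    then show "\<delta> \<in> positive_paths (Suc m) k h"
      using \<delta>' unfolding \<delta> positive_paths_def by auto
  qed
qed

lemma finite_positive_paths: "finite (positive_paths m k h)"
proof (induction m arbitrary: k h)
  case (Suc m)
  then show ?case
    by (cases "h \<le> 0") (simp_all add: positive_paths_nonpos positive_paths_Suc)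
qed (simp add: positive_paths_0)

lemma path_weight_Suc:
  assumes "\<delta> \<in> positive_paths m (Suc k) g"
  shows "path_weight i x (Suc m) k (\<delta>(k := h)) =
    real_of_int ((h - g) * h) * x ^ ((i (Suc k) - i k) * nat h) * path_weight i x m (Suc k) \<delta>"
proof -
  have g: "\<delta> (Suc k) = g" using assms by (simp add: positive_paths_def)
  have "{k..<k + Suc m} = insert k {Suc k..<Suc k + m}" by auto
  then have "path_weight i x (Suc m) k (\<delta>(k := h)) =
      real_of_int ((h - g) * h) * x ^ ((i (Suc k) - i k) * nat h) * (\<Prod>j\<in>{Suc k..<Suc k + m}.
        real_of_int (((\<delta>(k := h)) j - (\<delta>(k := h)) (Suc j)) * (\<delta>(k := h)) j) *
        x ^ ((i (Suc j) - i j) * nat ((\<delta>(k := h)) j)))"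
    unfolding path_weight_def using g by simp
  also have "(\<Prod>j\<in>{Suc k..<Suc k + m}.
        real_of_int (((\<delta>(k := h)) j - (\<delta>(k := h)) (Suc j)) * (\<delta>(k := h)) j) *
        x ^ ((i (Suc j) - i j) * nat ((\<delta>(k := h)) j))) = path_weight i x m (Suc k) \<delta>"
    unfolding path_weight_def by (rule prod.cong) auto
  finally show ?thesis .
qed

lemma path_sum_Suc:
  assumes h: "h \<ge> 1"
  shows "(\<Sum>\<delta>\<in>positive_paths (Suc m) k h. path_weight i x (Suc m) k \<delta>) =
    real_of_int h * x ^ ((i (Suc k) - i k) * nat h) *
      ((\<Sum>\<delta>\<in>positive_paths m (Suc k) (h - 1). path_weight i x m (Suc k) \<delta>) -
       (\<Sum>\<delta>\<in>positive_paths m (Suc k) (h + 1). path_weight i x m (Suc k) \<delta>))"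
proof -
  let ?down = "positive_paths m (Suc k) (h - 1)" and ?up = "positive_paths m (Suc k) (h + 1)"
  let ?c = "real_of_int h * x ^ ((i (Suc k) - i k) * nat h)"
  have zero: "\<delta> k = 0" if "\<delta> \<in> ?down \<union> ?up" for \<delta> using that by (auto simp: positive_paths_def)
  have inj: "inj_on (\<lambda>\<delta>. \<delta>(k := h)) (?down \<union> ?up)"
    by (rule inj_onI) (metis zero fun_upd_triv fun_upd_upd)
  have disj: "?down \<inter> ?up = {}" by (auto simp: positive_paths_def)
  have "(\<Sum>\<delta>\<in>positive_paths (Suc m) k h. path_weight i x (Suc m) k \<delta>) =
      (\<Sum>\<delta>\<in>?down. path_weight i x (Suc m) k (\<delta>(k := h))) +
      (\<Sum>\<delta>\<in>?up. path_weight i x (Suc m) k (\<delta>(k := h)))"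
    unfolding positive_paths_Suc[OF h] sum.reindex[OF inj] comp_def
    by (rule sum.union_disjoint) (simp_all add: finite_positive_paths disj)
  also have "\<dots> = (\<Sum>\<delta>\<in>?down. ?c * path_weight i x m (Suc k) \<delta>) +
      (\<Sum>\<delta>\<in>?up. - ?c * path_weight i x m (Suc k) \<delta>)"
    by (intro arg_cong2[where f="(+)"] sum.cong) (simp_all add: path_weight_Suc)
  also have "\<dots> = ?c * (\<Sum>\<delta>\<in>?down. path_weight i x m (Suc k) \<delta>) +
      (- ?c) * (\<Sum>\<delta>\<in>?up. path_weight i x m (Suc k) \<delta>)"
    by (simp only: sum_distrib_left)
  finally show ?thesis by (simp add: algebra_simps)
qed

lemma walk_sum_paths:
  "h \<ge> 0 \<Longrightarrow> walk_sum i x m k (nat h) = (\<Sum>\<delta>\<in>positive_paths m k h. path_weight i x m k \<delta>)"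
proof (induction m arbitrary: k h)
  case 0
  then show ?case by (auto simp: positive_paths_0 path_weight_def)
next
  case (Suc m)
  show ?case
  proof (cases "h = 0")
    case True
    then show ?thesis by (simp add: positive_paths_nonpos)
  next
    case False
    then have h: "h \<ge> 1" using Suc.prems by simp
    have "nat (h - 1) = nat h - 1" "nat (h + 1) = Suc (nat h)" "real (nat h) = real_of_int h"
      using h by auto
    then show ?thesis
      using Suc.IH[of "h - 1" "Suc k"] Suc.IH[of "h + 1" "Suc k"] h
      by (simp add: path_sum_Suc)
  qed
qed

lemma dyck_facts:
  assumes "\<delta> \<in> dyck_star r"
  shows "\<delta> 0 = 0" "\<delta> (2*r) = 0" "\<And>k. k < 2*r \<Longrightarrow> \<bar>\<delta> (Suc k) - \<delta> k\<bar> = 1"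
    "\<And>k. 1 \<le> k \<Longrightarrow> k < 2*r \<Longrightarrow> \<delta> k \<ge> 1" "\<And>k. 2*r < k \<Longrightarrow> \<delta> k = 0"
  using assms unfolding dyck_star_def by auto

lemma dyck_nonneg:
  assumes "\<delta> \<in> dyck_star r" shows "\<delta> k \<ge> 0"
proof (cases "1 \<le> k \<and> k < 2*r")
  case True
  then show ?thesis using dyck_facts(4)[OF assms, of k] by simp
next
  case False
  then have "k = 0 \<or> k = 2*r \<or> 2*r < k" by auto
  then show ?thesis using dyck_facts(1,2,5)[OF assms] by auto
qed

lemma dyck_star_paths:
  assumes r: "1 \<le> r"
  shows "dyck_star r = positive_paths (2 * r - 1) 1 1"
proof (intro set_eqI iffI)
  have N: "1 + (2 * r - 1) = 2 * r" using r by simp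
  fix \<delta>
  {
    assume \<delta>: "\<delta> \<in> dyck_star r"
    have "\<delta> 1 = 1" using dyck_facts(1)[OF \<delta>] dyck_facts(3)[OF \<delta>, of 0] dyck_facts(4)[OF \<delta>, of 1] r
      by auto
    then show "\<delta> \<in> positive_paths (2 * r - 1) 1 1"
      using dyck_facts[OF \<delta>] unfolding positive_paths_def N by auto
  next
    assume \<delta>: "\<delta> \<in> positive_paths (2 * r - 1) 1 1"
    then have "\<delta> 0 = 0" "\<delta> 1 = 1" unfolding positive_paths_def by auto
    then have "\<bar>\<delta> (Suc k) - \<delta> k\<bar> = 1" if "k < 2 * r" for k
      using \<delta> that unfolding positive_paths_def N by (cases k) auto
    then show "\<delta> \<in> dyck_star r"
      using \<delta> unfolding dyck_star_def positive_paths_def N by auto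
  }
qed

lemma sign_product:
  fixes e :: "nat \<Rightarrow> int"
  assumes "finite J" "\<And>j. j \<in> J \<Longrightarrow> e j = -1 \<or> e j = 1"
  shows "(\<Prod>j\<in>J. e j) = (-1) ^ card {j\<in>J. e j = -1} \<and>
         (\<Sum>j\<in>J. e j) = int (card J) - 2 * int (card {j\<in>J. e j = -1})"
  using assms
proof (induction J rule: finite_induct)
  case (insert a J)
  then have IH: "(\<Prod>j\<in>J. e j) = (-1) ^ card {j\<in>J. e j = -1}"
      "(\<Sum>j\<in>J. e j) = int (card J) - 2 * int (card {j\<in>J. e j = -1})" by auto
  show ?case
  proof (cases "e a = -1")
    case True
    then have "{j\<in>insert a J. e j = -1} = insert a {j\<in>J. e j = -1}" by auto
    then show ?thesis using True IH insert(1,2) by simp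
  next
    case False
    then have "e a = 1" "{j\<in>insert a J. e j = -1} = {j\<in>J. e j = -1}" using insert by auto
    then show ?thesis using IH insert(1,2) by simp
  qed
qed simp

text \<open>After its first (up) step, a Dyck path of length \<open>2r\<close> makes \<open>r - 1\<close> more up steps.\<close>
lemma dyck_sign:
  assumes r: "1 \<le> r" and \<delta>: "\<delta> \<in> dyck_star r"
  shows "(\<Prod>j\<in>{1..<2*r}. \<delta> j - \<delta> (Suc j)) = (-1) ^ (r - 1)"
proof -
  have "\<delta> 1 = 1" using \<delta> dyck_star_paths[OF r] by (auto simp: positive_paths_def)
  have signs: "\<delta> j - \<delta> (Suc j) = -1 \<or> \<delta> j - \<delta> (Suc j) = 1" if "j \<in> {1..<2*r}" for j
    using dyck_facts(3)[OF \<delta>, of j] that by auto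
  note count = sign_product[of "{1..<2*r}" "\<lambda>j. \<delta> j - \<delta> (Suc j)", OF _ signs]
  have "(\<Sum>j\<in>{1..<2*r}. \<delta> j - \<delta> (Suc j)) = - (\<Sum>j\<in>{1..<2*r}. \<delta> (Suc j) - \<delta> j)"
    by (simp add: sum_negf[symmetric])
  also have "\<dots> = 1" using sum_Suc_diff'[of 1 "2*r" \<delta>] r dyck_facts(2)[OF \<delta>] \<open>\<delta> 1 = 1\<close> by simp
  finally have "int (card {j \<in> {1..<2 * r}. \<delta> j - \<delta> (Suc j) = - 1}) = int r - 1"
    using count r by simp
  then have "card {j \<in> {1..<2 * r}. \<delta> j - \<delta> (Suc j) = - 1} = r - 1" by linarith
  then show ?thesis using count by simp
qed

lemma path_hits_level_up:
  fixes \<delta> :: "nat \<Rightarrow> int"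
  assumes pq: "p \<le> q" and steps: "\<And>j. p \<le> j \<Longrightarrow> j < q \<Longrightarrow> \<bar>\<delta> (Suc j) - \<delta> j\<bar> = 1"
    and l: "\<delta> p \<le> l" "l \<le> \<delta> q"
  shows "\<exists>c. p \<le> c \<and> c \<le> q \<and> \<delta> c = l"
  using pq steps l
proof (induction q rule: dec_induct)
  case (step q)
  show ?case
  proof (cases "l \<le> \<delta> q")
    case True
    then obtain c where "p \<le> c" "c \<le> q" "\<delta> c = l" using step by auto
    then show ?thesis by (intro exI[of _ c]) auto
  next
    case False
    have "\<bar>\<delta> (Suc q) - \<delta> q\<bar> = 1" using step by auto
    then have "\<delta> (Suc q) = l" using False step.prems by auto
    then show ?thesis using step by (intro exI[of _ "Suc q"]) auto
  qed
qed auto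

lemma path_hits_level:
  fixes \<delta> :: "nat \<Rightarrow> int"
  assumes pq: "p \<le> q" and steps: "\<And>j. p \<le> j \<Longrightarrow> j < q \<Longrightarrow> \<bar>\<delta> (Suc j) - \<delta> j\<bar> = 1"
    and l: "min (\<delta> p) (\<delta> q) \<le> l" "l \<le> max (\<delta> p) (\<delta> q)"
  shows "\<exists>c. p \<le> c \<and> c \<le> q \<and> \<delta> c = l"
proof (cases "\<delta> p \<le> \<delta> q")
  case True
  then show ?thesis using path_hits_level_up[of p q \<delta> l, OF pq steps] l by auto
next
  case False
  have "\<exists>c. p \<le> c \<and> c \<le> q \<and> - \<delta> c = - l"
    using path_hits_level_up[OF pq, of "\<lambda>j. - \<delta> j" "- l"] steps l False
    by (auto simp: abs_minus_commute)
  then show ?thesis by auto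
qed

definition partner :: "(nat \<Rightarrow> int) \<Rightarrow> nat \<Rightarrow> nat" where
  "partner \<delta> a = (LEAST b. a < b \<and> \<delta> b = \<delta> (a - 1))"

definition up_steps :: "nat \<Rightarrow> (nat \<Rightarrow> int) \<Rightarrow> nat set" where
  "up_steps r \<delta> = {a. a \<in> {1..2*r} \<and> \<delta> a = \<delta> (a - 1) + 1}"

lemma dyck_pairing_partner: "dyck_pairing r \<delta> = (\<lambda>a. (a, partner \<delta> a)) ` up_steps r \<delta>"
  unfolding dyck_pairing_def up_steps_def partner_def by auto

text \<open>The partner exists (the path must come back down to level \<open>\<delta>\<^sub>a\<^sub>-\<^sub>1\<close> by time \<open>2r\<close>),
  and in between the path stays away from that level.\<close>
lemma partner_props:
  assumes \<delta>: "\<delta> \<in> dyck_star r" and a: "a \<in> up_steps r \<delta>"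
  shows "a < partner \<delta> a" "partner \<delta> a \<le> 2*r" "\<delta> (partner \<delta> a) = \<delta> (a - 1)"
    "\<And>b. a < b \<Longrightarrow> b < partner \<delta> a \<Longrightarrow> \<delta> b \<noteq> \<delta> (a - 1)"
proof -
  have a1: "1 \<le> a" "a \<le> 2*r" "\<delta> a = \<delta> (a - 1) + 1" using a by (auto simp: up_steps_def)
  obtain c where c: "a \<le> c" "c \<le> 2*r" "\<delta> c = \<delta> (a - 1)"
    using path_hits_level[of a "2*r" \<delta> "\<delta> (a - 1)"] a1 dyck_facts[OF \<delta>] dyck_nonneg[OF \<delta>, of "a - 1"]
    by auto
  then have P: "a < c \<and> \<delta> c = \<delta> (a - 1)" using a1 by (cases "c = a") auto
  have "a < partner \<delta> a \<and> \<delta> (partner \<delta> a) = \<delta> (a - 1)"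
    unfolding partner_def by (rule LeastI[of _ c]) (rule P)
  then show "a < partner \<delta> a" "\<delta> (partner \<delta> a) = \<delta> (a - 1)" by simp_all
  have "partner \<delta> a \<le> c" unfolding partner_def by (rule Least_le) (rule P)
  then show "partner \<delta> a \<le> 2*r" using c by linarith
  show "\<delta> b \<noteq> \<delta> (a - 1)" if "a < b" "b < partner \<delta> a" for b
    using not_less_Least[of b "\<lambda>b. a < b \<and> \<delta> b = \<delta> (a - 1)"] that by (simp add: partner_def)
qed

definition covering_arcs :: "nat \<Rightarrow> (nat \<Rightarrow> int) \<Rightarrow> nat \<Rightarrow> nat set" where
  "covering_arcs r \<delta> j = {a\<in>up_steps r \<delta>. a \<le> j \<and> j < partner \<delta> a}"

lemma covering_arc_below:
  assumes \<delta>: "\<delta> \<in> dyck_star r" and j: "j < 2*r" and a: "a \<in> covering_arcs r \<delta> j"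
  shows "\<delta> (a - 1) < \<delta> j"
proof (rule ccontr)
  assume "\<not> \<delta> (a - 1) < \<delta> j"
  have ua: "a \<in> up_steps r \<delta>" "a \<le> j" "j < partner \<delta> a" using a by (auto simp: covering_arcs_def)
  then have "\<delta> a = \<delta> (a - 1) + 1" by (simp add: up_steps_def)
  then obtain c where c: "a \<le> c" "c \<le> j" "\<delta> c = \<delta> (a - 1)"
    using path_hits_level[of a j \<delta> "\<delta> (a - 1)"] ua \<open>\<not> \<delta> (a - 1) < \<delta> j\<close> dyck_facts(3)[OF \<delta>] j
    by auto
  then have "a < c" using \<open>\<delta> a = \<delta> (a - 1) + 1\<close> by (cases "a = c") auto
  then show False using partner_props(4)[OF \<delta> ua(1), of c] c ua by auto
qed

lemma covering_arcs_levels_inj: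
  assumes \<delta>: "\<delta> \<in> dyck_star r" and a: "a \<in> covering_arcs r \<delta> j" and b: "b \<in> covering_arcs r \<delta> j"
    and level: "\<delta> (a - 1) = \<delta> (b - 1)" and ab: "a \<le> b"
  shows "a = b"
proof (rule ccontr)
  assume "a \<noteq> b"
  have ua: "a \<in> up_steps r \<delta>" "1 \<le> a" "\<delta> a = \<delta> (a - 1) + 1" "b \<le> j" "j < partner \<delta> a"
    and ub: "1 \<le> b"
    using a b by (auto simp: covering_arcs_def up_steps_def)
  then have "a < b - 1" using level ab \<open>a \<noteq> b\<close> by (cases "b - 1 = a") auto
  moreover have "b - 1 < partner \<delta> a" using ua ub by linarith
  ultimately show False using partner_props(4)[OF \<delta> ua(1), of "b - 1"] level by auto
qed

lemma covering_arc_exists: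
  assumes \<delta>: "\<delta> \<in> dyck_star r" and j: "1 \<le> j" "j < 2*r" and l: "0 \<le> l" "l < \<delta> j"
  shows "\<exists>a\<in>covering_arcs r \<delta> j. \<delta> (a - 1) = l"
proof -
  note f = dyck_facts[OF \<delta>]
  define S where "S = {p. p \<le> j \<and> \<delta> p = l}"
  have "\<exists>c. 0 \<le> c \<and> c \<le> j \<and> \<delta> c = l"
    using path_hits_level[of 0 j \<delta> l] f l j by auto
  then have "S \<noteq> {}" "finite S" by (auto simp: S_def)
  define p where "p = Max S"
  have pS: "p \<in> S" and pmax: "\<And>c. c \<in> S \<Longrightarrow> c \<le> p"
    using Max_in[OF \<open>finite S\<close> \<open>S \<noteq> {}\<close>] Max_ge[OF \<open>finite S\<close>] by (auto simp: p_def)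
  have pj: "p < j" using pS l by (cases "p = j") (auto simp: S_def)
  have up: "\<delta> (Suc p) = l + 1"
  proof (rule ccontr)
    assume "\<delta> (Suc p) \<noteq> l + 1"
    then have "\<delta> (Suc p) = l - 1" using f(3)[of p] pj j pS by (auto simp: S_def)
    then obtain c where "Suc p \<le> c" "c \<le> j" "\<delta> c = l"
      using path_hits_level[of "Suc p" j \<delta> l] pj f l j by auto
    then show False using pmax[of c] by (auto simp: S_def)
  qed
  then have a: "Suc p \<in> up_steps r \<delta>" using pS pj j by (auto simp: up_steps_def S_def)
  have "j < partner \<delta> (Suc p)"
  proof (rule ccontr)
    assume "\<not> j < partner \<delta> (Suc p)"
    moreover have "\<delta> (partner \<delta> (Suc p)) = l" "Suc p < partner \<delta> (Suc p)"
      using partner_props(1,3)[OF \<delta> a] pS by (auto simp: S_def)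
    ultimately show False using pmax[of "partner \<delta> (Suc p)"] by (auto simp: S_def)
  qed
  then have "Suc p \<in> covering_arcs r \<delta> j" using a pj by (auto simp: covering_arcs_def)
  moreover have "\<delta> (Suc p - 1) = l" using pS by (simp add: S_def)
  ultimately show ?thesis by blast
qed

lemma card_covering_arcs:
  assumes \<delta>: "\<delta> \<in> dyck_star r" and j: "1 \<le> j" "j < 2*r"
  shows "card (covering_arcs r \<delta> j) = nat (\<delta> j)"
proof -
  have "bij_betw (\<lambda>a. nat (\<delta> (a - 1))) (covering_arcs r \<delta> j) {0..<nat (\<delta> j)}"
  proof (rule bij_betwI')
    fix a b assume a: "a \<in> covering_arcs r \<delta> j" and b: "b \<in> covering_arcs r \<delta> j"
    show "(nat (\<delta> (a - 1)) = nat (\<delta> (b - 1))) = (a = b)"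
      unfolding eq_nat_nat_iff[OF dyck_nonneg[OF \<delta>] dyck_nonneg[OF \<delta>]]
      using covering_arcs_levels_inj[OF \<delta> a b] covering_arcs_levels_inj[OF \<delta> b a]
      by (metis nat_le_linear)
  next
    fix a assume "a \<in> covering_arcs r \<delta> j"
    then show "nat (\<delta> (a - 1)) \<in> {0..<nat (\<delta> j)}"
      using covering_arc_below[OF \<delta> j(2) \<open>a \<in> covering_arcs r \<delta> j\<close>] dyck_nonneg[OF \<delta>, of "a - 1"]
      by simp
  next
    fix l assume "l \<in> {0..<nat (\<delta> j)}"
    then have "int l < \<delta> j" by simp
    then obtain a where "a \<in> covering_arcs r \<delta> j" "\<delta> (a - 1) = int l"
      using covering_arc_exists[OF \<delta> j, of "int l"] by auto
    then show "\<exists>a\<in>covering_arcs r \<delta> j. l = nat (\<delta> (a - 1))" by (intro bexI[of _ a]) simp_all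
  qed
  then show ?thesis by (simp add: bij_betw_same_card)
qed

lemma telescope_mono:
  fixes i :: "nat \<Rightarrow> nat"
  assumes "a \<le> b" "\<And>j. a \<le> j \<Longrightarrow> j < b \<Longrightarrow> i j \<le> i (Suc j)"
  shows "i b - i a = (\<Sum>j\<in>{a..<b}. i (Suc j) - i j)"
proof -
  have "i b - i a = (\<Sum>j\<in>{a..<b}. i (Suc j) - i j) \<and> i a \<le> i b"
    using assms
  proof (induction b rule: dec_induct)
    case (step b)
    then have "i b - i a = (\<Sum>j\<in>{a..<b}. i (Suc j) - i j)" "i a \<le> i b" "i b \<le> i (Suc b)" "a \<le> b"
      by simp_all
    then show ?case by (simp add: sum.atLeastLessThan_Suc)
  qed simp
  then show ?thesis by simp
qed

text \<open>Exchanging the order of summation: the total length \<open>\<Sum> (i\<^sub>b - i\<^sub>a)\<close> of the arcs equals the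
  sum over steps \<open>j\<close> of the gap \<open>i\<^sub>j\<^sub>+\<^sub>1 - i\<^sub>j\<close> times the number \<open>\<delta>\<^sub>j\<close> of arcs covering \<open>j\<close>.\<close>
lemma pairing_exponent:
  fixes i :: "nat \<Rightarrow> nat"
  assumes r: "1 \<le> r" and \<delta>: "\<delta> \<in> dyck_star r"
    and mono: "\<And>j. 1 \<le> j \<Longrightarrow> j < 2*r \<Longrightarrow> i j \<le> i (Suc j)"
  shows "(\<Sum>(a, b)\<in>dyck_pairing r \<delta>. i b - i a) = (\<Sum>j\<in>{1..<2*r}. (i (Suc j) - i j) * nat (\<delta> j))"
proof -
  let ?U = "up_steps r \<delta>"
  let ?d = "\<lambda>j. i (Suc j) - i j"
  have inj: "inj_on (\<lambda>a. (a, partner \<delta> a)) ?U" by (auto intro: inj_onI)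
  have "(\<Sum>(a, b)\<in>dyck_pairing r \<delta>. i b - i a) = (\<Sum>a\<in>?U. i (partner \<delta> a) - i a)"
    unfolding dyck_pairing_partner by (simp add: sum.reindex[OF inj])
  also have "\<dots> = (\<Sum>a\<in>?U. \<Sum>j\<in>{1..<2*r}. if a \<le> j \<and> j < partner \<delta> a then ?d j else 0)"
  proof (rule sum.cong)
    fix a assume a: "a \<in> ?U"
    have "1 \<le> a" "a < partner \<delta> a" "partner \<delta> a \<le> 2*r"
      using a partner_props(1,2)[OF \<delta> a] by (auto simp: up_steps_def)
    then have "i (partner \<delta> a) - i a = (\<Sum>j\<in>{a..<partner \<delta> a}. ?d j)"
      using mono by (intro telescope_mono) auto
    also have "{a..<partner \<delta> a} = {j\<in>{1..<2*r}. a \<le> j \<and> j < partner \<delta> a}"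
      using \<open>1 \<le> a\<close> \<open>partner \<delta> a \<le> 2*r\<close> by auto
    also have "(\<Sum>j\<in>{j\<in>{1..<2*r}. a \<le> j \<and> j < partner \<delta> a}. ?d j) =
        (\<Sum>j\<in>{1..<2*r}. if a \<le> j \<and> j < partner \<delta> a then ?d j else 0)"
      by (rule sum.inter_filter) simp
    finally show "i (partner \<delta> a) - i a =
        (\<Sum>j\<in>{1..<2*r}. if a \<le> j \<and> j < partner \<delta> a then ?d j else 0)" .
  qed simp
  also have "\<dots> = (\<Sum>j\<in>{1..<2*r}. \<Sum>a\<in>?U. if a \<le> j \<and> j < partner \<delta> a then ?d j else 0)"
    by (rule sum.swap)
  also have "\<dots> = (\<Sum>j\<in>{1..<2*r}. card (covering_arcs r \<delta> j) * ?d j)"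
    by (intro sum.cong) (simp_all add: sum.If_cases covering_arcs_def up_steps_def Int_def)
  also have "\<dots> = (\<Sum>j\<in>{1..<2*r}. ?d j * nat (\<delta> j))"
    by (intro sum.cong) (simp_all add: card_covering_arcs[OF \<delta>])
  finally show ?thesis .
qed

lemma dyck_path_weight:
  assumes r: "1 \<le> r" and \<delta>: "\<delta> \<in> dyck_star r"
    and mono: "\<And>j. 1 \<le> j \<Longrightarrow> j < 2*r \<Longrightarrow> i j \<le> i (Suc j)"
  shows "path_weight i x (2*r - 1) 1 \<delta> = (-1) ^ (r - 1) *
    (real_of_int (\<Prod>k = 1..2*r-1. \<delta> k) * x ^ (\<Sum>(a, b)\<in>dyck_pairing r \<delta>. i b - i a))"
proof -
  have steps: "{1..<1 + (2*r - 1)} = {1..<2*r}" "{1..2*r-1} = {1..<2*r}" using r by auto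
  have "path_weight i x (2*r - 1) 1 \<delta> =
      real_of_int (\<Prod>j\<in>{1..<2*r}. \<delta> j - \<delta> (Suc j)) * real_of_int (\<Prod>j\<in>{1..<2*r}. \<delta> j) *
      x ^ (\<Sum>j\<in>{1..<2*r}. (i (Suc j) - i j) * nat (\<delta> j))"
    unfolding path_weight_def steps by (simp add: prod.distrib power_sum)
  also have "(\<Prod>j\<in>{1..<2*r}. \<delta> j - \<delta> (Suc j)) = (-1) ^ (r - 1)" by (rule dyck_sign[OF r \<delta>])
  also have "(\<Sum>j\<in>{1..<2*r}. (i (Suc j) - i j) * nat (\<delta> j)) = (\<Sum>(a, b)\<in>dyck_pairing r \<delta>. i b - i a)"
    by (rule pairing_exponent[where i=i, OF r \<delta> mono, symmetric])
  finally show ?thesis unfolding steps by simp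
qed

text \<open>Theorem 5.1: the joint cumulants of the Ising chain as a sum over Dyck paths.\<close>
theorem theorem5p1:
  fixes \<beta> x :: real and n r :: nat and i :: "nat \<Rightarrow> nat"
  assumes "\<beta> > 0" and "x = tanh \<beta>" and "r \<ge> 1"
    and "1 \<le> i 1" and "\<And>k. 1 \<le> k \<Longrightarrow> k < 2*r \<Longrightarrow> i k \<le> i (Suc k)" and "i (2*r) \<le> n"
  shows "cumulant (ising_E n \<beta>) (2*r) (\<lambda>j \<sigma>. real_of_int (\<sigma> (i j))) =
    (-1) ^ (r - 1) * (\<Sum>\<delta>\<in>dyck_star r.
        real_of_int (\<Prod>k = 1..2*r-1. \<delta> k) *
        x ^ (\<Sum>(a, b)\<in>dyck_pairing r \<delta>. i b - i a))"
proof -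
  note x = assms(2) and r = assms(3) and i1 = assms(4) and mono = assms(5) and last = assms(6)
  have s: "1 \<le> 2 * r" using r by simp
  have "cumulant (ising_E n \<beta>) (2*r) (\<lambda>j \<sigma>. real_of_int (\<sigma> (i j))) =
      (\<Sum>P\<in>{P. partition_on {1..2*r} P}. x ^ partition_exponent i (2*r) P *
        state_weight i x (2*r) (2*r) (odd_blocks P) (even_blocks P))"
    by (rule cumulant_partition_sum[OF mono i1 s last x])
  also have "\<dots> = walk_sum i x (2*r - 1) 1 1"
    by (rule partition_sum_invariant[OF mono i1 s order_refl])
  also have "\<dots> = (\<Sum>\<delta>\<in>positive_paths (2*r - 1) 1 1. path_weight i x (2*r - 1) 1 \<delta>)"
    using walk_sum_paths[of 1] by simp
  also have "\<dots> = (\<Sum>\<delta>\<in>dyck_star r. (-1) ^ (r - 1) *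
      (real_of_int (\<Prod>k = 1..2*r-1. \<delta> k) * x ^ (\<Sum>(a, b)\<in>dyck_pairing r \<delta>. i b - i a)))"
    unfolding dyck_star_paths[OF r, symmetric] using dyck_path_weight[where i=i and x=x, OF r _ mono] by simp
  finally show ?thesis by (simp add: sum_distrib_left)
qed

end
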